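(* Let $b\in\{0,1\}^d$ and let $q$ be the simple gradient associated with $b$. Then $H_{\bar b}(q)=0$ (equivalently $N_{\bar b}(q)=1$) for every bitmap $\bar b\ge b$.
   Context: Jackson network with a tree topology on nodes $\{1,\dots,d\}$, root node $1$; $i\to j$ means node $j$ is a child of node $i$. Customers arrive from outside only at node $1$, with rate $\lambda>0$. For $i\to j$, $\mu_{i,j}>0$ is the rate at which node $i$ serves customers and sends them to node $j$; $\mu_{i,0}\ge 0$ is the rate at which node $i$ serves customers who then leave the system. Let $\mu_i=\sum_{k:i\to k}\mu_{i,k}+\mu_{i,0}>0$. Arrival rates: $\Lambda_1=\lambda$ and $\Lambda_j=\Lambda_i\mu_{i,j}/\mu_i$ if $i\to j$. Utilities $\rho_i=\Lambda_i/\mu_i$, assumed to satisfy $\max_i\rho_i<1$; also $\lambda+\sum_i\mu_i=1$. Let $\mu'_{i,0}=\Lambda_i\mu_{i,0}/\mu_i$. A bitmap $b\in\{0,1\}^d$ encodes which nodes are nonempty ($b(i)=1$) or empty ($b(i)=0$); $b'\ge b$ means $b'(i)\ge b(i)$ for all $i$. For a bitmap $b$ and $q\in\mathbb{R}^d$: $N_b(q)=\lambda e^{-q(1)/2}+\sum_{i:b(i)=1}\sum_{j:i\to j}\mu_{i,j}e^{(q(i)-q(j))/2}+\sum_{i:b(i)=1}\mu_{i,0}e^{q(i)/2}+\sum_{i:b(i)=0}\mu_i$, and $H_b(q)=-2\log N_b(q)$. Simple rates: $m_i(b)=\mu_i$ if $b(i)=1$, and $m_i(b)=\sum_{k:i\to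 k}m_k(b)+\mu'_{i,0}$ if $b(i)=0$ (recursively from the leaves). The simple gradient of $b$ is $q$ with $q(i)=2\log(\Lambda_i/m_i(b))$. *)

theory Defs
  imports Complex_Main
begin

text \<open>Nodes are the naturals 1..d, root 1.  The tree is given by a parent map par:
  for j in {2..d}, par j is the parent of j, i.e. (par j) \<rightarrow> j.  Rates:
  mu i j is mu_{i,j} for an edge i \<rightarrow> j, and mu i 0 is mu_{i,0}.  Bitmaps are
  predicates nat \<Rightarrow> bool, only their values on {1..d} matter.\<close>

definition children :: "(nat \<Rightarrow> nat) \<Rightarrow> nat \<Rightarrow> nat \<Rightarrow> nat set" where
  "children par d i = {j \<in> {2..d}. par j = i}"

definition is_tree :: "(nat \<Rightarrow> nat) \<Rightarrow> nat \<Rightarrow> bool" where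
  "is_tree par d \<longleftrightarrow> 1 \<le> d \<and> (\<forall>j\<in>{2..d}. par j \<in> {1..d})
     \<and> (\<forall>j\<in>{1..d}. \<exists>k. (par ^^ k) j = 1)"

definition mu_tot :: "(nat \<Rightarrow> nat) \<Rightarrow> nat \<Rightarrow> (nat \<Rightarrow> nat \<Rightarrow> real) \<Rightarrow> nat \<Rightarrow> real" where
  "mu_tot par d mu i = (\<Sum>k\<in>children par d i. mu i k) + mu i 0"

text \<open>Lam is the vector of arrival rates (determined uniquely by these equations on a tree).\<close>
definition arrival_rates ::
  "(nat \<Rightarrow> nat) \<Rightarrow> nat \<Rightarrow> real \<Rightarrow> (nat \<Rightarrow> nat \<Rightarrow> real) \<Rightarrow> (nat \<Rightarrow> real) \<Rightarrow> bool" where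
  "arrival_rates par d lam mu Lam \<longleftrightarrow> Lam 1 = lam \<and>
     (\<forall>i\<in>{1..d}. \<forall>j\<in>children par d i. Lam j = Lam i * mu i j / mu_tot par d mu i)"

text \<open>m is the vector of simple rates m_i(b) (determined uniquely by these equations,
  recursively from the leaves).\<close>
definition simple_rates ::
  "(nat \<Rightarrow> nat) \<Rightarrow> nat \<Rightarrow> (nat \<Rightarrow> nat \<Rightarrow> real) \<Rightarrow> (nat \<Rightarrow> real) \<Rightarrow> (nat \<Rightarrow> bool)
     \<Rightarrow> (nat \<Rightarrow> real) \<Rightarrow> bool" where
  "simple_rates par d mu Lam b m \<longleftrightarrow> (\<forall>i\<in>{1..d}. m i =
     (if b i then mu_tot par d mu i
      else (\<Sum>k\<in>children par d i. m k) + Lam i * mu i 0 / mu_tot par d mu i))"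

definition simple_gradient :: "(nat \<Rightarrow> real) \<Rightarrow> (nat \<Rightarrow> real) \<Rightarrow> nat \<Rightarrow> real" where
  "simple_gradient Lam m i = 2 * ln (Lam i / m i)"

definition Nb ::
  "(nat \<Rightarrow> nat) \<Rightarrow> nat \<Rightarrow> real \<Rightarrow> (nat \<Rightarrow> nat \<Rightarrow> real) \<Rightarrow> (nat \<Rightarrow> bool) \<Rightarrow> (nat \<Rightarrow> real) \<Rightarrow> real" where
  "Nb par d lam mu b q =
     lam * exp (- q 1 / 2)
     + (\<Sum>i\<in>{i\<in>{1..d}. b i}. \<Sum>j\<in>children par d i. mu i j * exp ((q i - q j) / 2))
     + (\<Sum>i\<in>{i\<in>{1..d}. b i}. mu i 0 * exp (q i / 2))
     + (\<Sum>i\<in>{i\<in>{1..d}. \<not> b i}. mu_tot par d mu i)"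

definition Hb ::
  "(nat \<Rightarrow> nat) \<Rightarrow> nat \<Rightarrow> real \<Rightarrow> (nat \<Rightarrow> nat \<Rightarrow> real) \<Rightarrow> (nat \<Rightarrow> bool) \<Rightarrow> (nat \<Rightarrow> real) \<Rightarrow> real" where
  "Hb par d lam mu b q = - 2 * ln (Nb par d lam mu b q)"

end

theory Submission
  imports Defs
begin

(* Write q for the simple gradient of b, so that exp (q i / 2) = Lam i / m i.
   Then N_b'(q) is a sum of one term per node: the edge terms mu i j e^((q i - q j)/2)
   of a nonempty node i telescope to (mu_tot i / m i) * m j, so node i contributes
   (mu_tot i / m i) * (sum of m over the children of i + exit flow of i) if b' i holds,
   and mu_tot i otherwise.  Using the defining equations of m and b <= b', in every
   case this contribution equals  (children sum of m) + exit flow i + mu_tot i - m i.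
   Summing over the tree, every non-root node is the child of exactly one node and the
   exit flows add up to lam (flow conservation), so everything cancels except
   lam + sum of mu_tot, which is 1 by normalisation. *)

definition tree_depth :: "(nat \<Rightarrow> nat) \<Rightarrow> nat \<Rightarrow> nat" where
  "tree_depth par j = (LEAST k. (par ^^ k) j = 1)"

lemma children_subset: "children par d i \<subseteq> {2..d}"
  unfolding children_def by auto

lemma finite_children: "finite (children par d i)"
  by (rule finite_subset[OF children_subset]) simp

lemma child_in_nodes: "j \<in> children par d i \<Longrightarrow> j \<in> {1..d}"
  using children_subset by fastforce

lemma in_children_parent: "j \<in> {2..d} \<Longrightarrow> j \<in> children par d (par j)"
  unfolding children_def by auto

lemma tree_depth_parent:
  assumes tree: "is_tree par d" and j: "j \<in> {2..d}"
  shows "tree_depth par (par j) < tree_depth par j"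
proof -
  have "\<exists>k. (par ^^ k) j = 1"
    using tree j unfolding is_tree_def by auto
  hence root: "(par ^^ tree_depth par j) j = 1"
    unfolding tree_depth_def by (rule LeastI_ex)
  moreover have "j \<noteq> 1" using j by simp
  ultimately have "tree_depth par j \<noteq> 0" by (metis funpow_0)
  then obtain k where k: "tree_depth par j = Suc k"
    using not0_implies_Suc by blast
  have "(par ^^ k) (par j) = 1"
    using root k by (simp only: funpow_Suc_right comp_def)
  hence "tree_depth par (par j) \<le> k"
    unfolding tree_depth_def by (rule Least_le)
  with k show ?thesis by simp
qed

lemma tree_depth_child:
  "is_tree par d \<Longrightarrow> j \<in> children par d i \<Longrightarrow> tree_depth par i < tree_depth par j"
  using tree_depth_parent children_subset unfolding children_def by fastforce

lemma tree_induct_down [consumes 2, case_names root step]: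
  assumes tree: "is_tree par d"
    and i: "i \<in> {1..d}"
    and root: "P 1"
    and step: "\<And>j. j \<in> {2..d} \<Longrightarrow> P (par j) \<Longrightarrow> P j"
  shows "P i"
  using i
proof (induction "tree_depth par i" arbitrary: i rule: less_induct)
  case less
  show ?case
  proof (cases "i = 1")
    case True
    with root show ?thesis by simp
  next
    case False
    with less.prems have i2: "i \<in> {2..d}" by auto
    have "par i \<in> {1..d}"
      using tree i2 unfolding is_tree_def by auto
    with less.hyps tree_depth_parent[OF tree i2] have "P (par i)" by blast
    with step i2 show ?thesis by blast
  qed
qed

lemma tree_induct_up [consumes 2, case_names step]:
  assumes tree: "is_tree par d"
    and i: "i \<in> {1..d}"
    and step: "\<And>i. i \<in> {1..d} \<Longrightarrow> (\<And>j. j \<in> children par d i \<Longrightarrow> P j) \<Longrightarrow> P i"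
  shows "P i"
  using i
proof (induction "Max (tree_depth par ` {1..d}) - tree_depth par i" arbitrary: i
    rule: less_induct)
  case less
  show ?case
  proof (rule step[OF less.prems])
    fix j assume j: "j \<in> children par d i"
    have "tree_depth par j \<le> Max (tree_depth par ` {1..d})"
      using child_in_nodes[OF j] by simp
    with tree_depth_child[OF tree j]
    have "Max (tree_depth par ` {1..d}) - tree_depth par j
        < Max (tree_depth par ` {1..d}) - tree_depth par i"
      by linarith
    then show "P j"
      using less.hyps child_in_nodes[OF j] by blast
  qed
qed

text \<open>Every non-root node is the child of exactly one node, so summing a function over
  all children of all nodes and adding the root value gives the sum over all nodes.\<close>
lemma sum_children_nodes:
  fixes f :: "nat \<Rightarrow> 'a::comm_monoid_add"
  assumes tree: "is_tree par d"
  shows "(\<Sum>i\<in>{1..d}. \<Sum>j\<in>children par d i. f j) + f 1 = (\<Sum>i\<in>{1..d}. f i)"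
proof -
  have d1: "1 \<le> d" and par: "\<forall>j\<in>{2..d}. par j \<in> {1..d}"
    using tree unfolding is_tree_def by auto
  have "(\<Sum>i\<in>{1..d}. \<Sum>j\<in>children par d i. f j) = (\<Sum>j\<in>{2..d}. f j)"
    unfolding children_def by (rule sum.group) (use par in auto)
  moreover have "{1..d} = insert 1 {2..d}"
    using d1 by auto
  ultimately show ?thesis
    by (simp add: add.commute)
qed

lemma Nb_node_sum:
  "Nb par d lam mu b q = lam * exp (- q 1 / 2) + (\<Sum>i\<in>{1..d}.
     if b i then (\<Sum>j\<in>children par d i. mu i j * exp ((q i - q j) / 2)) + mu i 0 * exp (q i / 2)
     else mu_tot par d mu i)"
proof -
  have "{i\<in>{1..d}. b i} = {1..d} \<inter> {i. b i}" "{i\<in>{1..d}. \<not> b i} = {1..d} \<inter> - {i. b i}"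
    by auto
  then show ?thesis
    unfolding Nb_def sum.If_cases[OF finite_atLeastAtMost]
    by (simp add: sum.distrib add.assoc)
qed

locale tree_network =
  fixes par :: "nat \<Rightarrow> nat" and d :: nat and lam :: real
    and mu :: "nat \<Rightarrow> nat \<Rightarrow> real" and Lam :: "nat \<Rightarrow> real"
  assumes tree: "is_tree par d"
    and lam_pos: "lam > 0"
    and mu_edge_pos: "\<forall>i\<in>{1..d}. \<forall>j\<in>children par d i. mu i j > 0"
    and mu_exit_nonneg: "\<forall>i\<in>{1..d}. mu i 0 \<ge> 0"
    and mu_tot_pos: "\<forall>i\<in>{1..d}. mu_tot par d mu i > 0"
    and arrivals: "arrival_rates par d lam mu Lam"
begin

text \<open>The rate at which customers leave the system from node i (written mu'_{i,0}).\<close>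
definition exit_flow :: "nat \<Rightarrow> real" where
  "exit_flow i = Lam i * mu i 0 / mu_tot par d mu i"

lemma root_node: "1 \<in> {1..d}"
  using tree unfolding is_tree_def by auto

lemma Lam_root: "Lam 1 = lam"
  using arrivals unfolding arrival_rates_def by auto

lemma Lam_child:
  "i \<in> {1..d} \<Longrightarrow> j \<in> children par d i \<Longrightarrow> Lam j = Lam i * mu i j / mu_tot par d mu i"
  using arrivals unfolding arrival_rates_def by auto

lemma Lam_pos:
  assumes "i \<in> {1..d}"
  shows "Lam i > 0"
  using tree assms
proof (induction i rule: tree_induct_down)
  case root
  show ?case using Lam_root lam_pos by simp
next
  case (step j)
  have p: "par j \<in> {1..d}" and c: "j \<in> children par d (par j)"
    using tree step(1) in_children_parent unfolding is_tree_def by auto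
  have "Lam (par j) > 0" using step(2) .
  with Lam_child[OF p c] mu_edge_pos mu_tot_pos p c show ?case by simp
qed

lemma exit_flow_nonneg: "i \<in> {1..d} \<Longrightarrow> exit_flow i \<ge> 0"
  unfolding exit_flow_def
  using Lam_pos mu_exit_nonneg mu_tot_pos by (simp add: less_imp_le)

lemma flow_balance:
  assumes i: "i \<in> {1..d}"
  shows "Lam i = (\<Sum>j\<in>children par d i. Lam j) + exit_flow i"
proof -
  have "(\<Sum>j\<in>children par d i. Lam j) = Lam i / mu_tot par d mu i * (\<Sum>j\<in>children par d i. mu i j)"
    using Lam_child[OF i] by (simp add: sum_distrib_left)
  also have "\<dots> + exit_flow i = Lam i / mu_tot par d mu i * ((\<Sum>j\<in>children par d i. mu i j) + mu i 0)"
    unfolding exit_flow_def by (simp add: algebra_simps)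
  also have "\<dots> = Lam i"
    using mu_tot_pos[rule_format, OF i] unfolding mu_tot_def[symmetric] by simp
  finally show ?thesis ..
qed

lemma total_exit_flow: "(\<Sum>i\<in>{1..d}. exit_flow i) = lam"
proof -
  have "(\<Sum>i\<in>{1..d}. Lam i) = (\<Sum>i\<in>{1..d}. \<Sum>j\<in>children par d i. Lam j) + (\<Sum>i\<in>{1..d}. exit_flow i)"
    using flow_balance by (simp add: sum.distrib[symmetric])
  with sum_children_nodes[OF tree, of Lam] Lam_root show ?thesis by simp
qed

end

locale simple_rate_network = tree_network +
  fixes b :: "nat \<Rightarrow> bool" and m :: "nat \<Rightarrow> real"
  assumes rates: "simple_rates par d mu Lam b m"
begin

definition subtree_rate :: "nat \<Rightarrow> real" where
  "subtree_rate i = (\<Sum>j\<in>children par d i. m j) + exit_flow i"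

lemma m_eq: "i \<in> {1..d} \<Longrightarrow> m i = (if b i then mu_tot par d mu i else subtree_rate i)"
  using rates unfolding simple_rates_def subtree_rate_def exit_flow_def by auto

text \<open>Simple rates are positive: a leaf has mu_tot = mu_{i,0} > 0, and an inner empty
  node inherits positivity from its children.\<close>
lemma m_pos:
  assumes "i \<in> {1..d}"
  shows "m i > 0"
  using tree assms
proof (induction i rule: tree_induct_up)
  case (step i)
  show ?case
  proof (cases "b i")
    case True
    with m_eq step(1) mu_tot_pos show ?thesis by simp
  next
    case False
    show ?thesis
    proof (cases "children par d i = {}")
      case True
      moreover have "mu_tot par d mu i > 0" using mu_tot_pos step(1) by blast
      ultimately have "mu i 0 > 0" unfolding mu_tot_def by simp
      hence "exit_flow i > 0"
        using Lam_pos mu_tot_pos step(1) unfolding exit_flow_def by simp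
      with m_eq step(1) False True show ?thesis unfolding subtree_rate_def by simp
    next
      case nonleaf: False
      have "(\<Sum>j\<in>children par d i. m j) > 0"
        using step nonleaf finite_children child_in_nodes by (intro sum_pos) auto
      with m_eq step(1) False exit_flow_nonneg show ?thesis
        unfolding subtree_rate_def by fastforce
    qed
  qed
qed

abbreviation q :: "nat \<Rightarrow> real" where
  "q \<equiv> simple_gradient Lam m"

lemma exp_half_q: "i \<in> {1..d} \<Longrightarrow> exp (q i / 2) = Lam i / m i"
  using Lam_pos m_pos by (simp add: simple_gradient_def)

lemma exp_minus_half_q: "i \<in> {1..d} \<Longrightarrow> exp (- q i / 2) = m i / Lam i"
  using exp_half_q[of i] by (simp add: exp_minus_inverse[symmetric] exp_minus)

text \<open>An edge term of N_b at the simple gradient: the arrival rates cancel.\<close>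
lemma edge_term:
  assumes i: "i \<in> {1..d}" and j: "j \<in> children par d i"
  shows "mu i j * exp ((q i - q j) / 2) = mu_tot par d mu i / m i * m j"
proof -
  have jD: "j \<in> {1..d}" using child_in_nodes[OF j] .
  have "exp ((q i - q j) / 2) = (Lam i / m i) / (Lam j / m j)"
    using exp_half_q[OF i] exp_half_q[OF jD] by (simp add: diff_divide_distrib exp_diff)
  moreover have "mu i j > 0" "mu_tot par d mu i > 0" "Lam i > 0" "m i > 0" "m j > 0"
    using mu_edge_pos mu_tot_pos Lam_pos m_pos i j jD by auto
  ultimately show ?thesis
    unfolding Lam_child[OF i j] by (simp add: field_simps)
qed

lemma service_terms:
  assumes i: "i \<in> {1..d}"
  shows "(\<Sum>j\<in>children par d i. mu i j * exp ((q i - q j) / 2)) + mu i 0 * exp (q i / 2)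
       = mu_tot par d mu i / m i * subtree_rate i"
proof -
  have "(\<Sum>j\<in>children par d i. mu i j * exp ((q i - q j) / 2))
      = mu_tot par d mu i / m i * (\<Sum>j\<in>children par d i. m j)"
    using edge_term[OF i] by (simp add: sum_distrib_left)
  moreover have "mu i 0 * exp (q i / 2) = mu_tot par d mu i / m i * exit_flow i"
    using exp_half_q[OF i] mu_tot_pos[rule_format, OF i] unfolding exit_flow_def by simp
  ultimately show ?thesis
    unfolding subtree_rate_def by (simp add: distrib_left)
qed

lemma node_contribution:
  assumes i: "i \<in> {1..d}" and ge: "b i \<longrightarrow> b' i"
  shows "(if b' i then (\<Sum>j\<in>children par d i. mu i j * exp ((q i - q j) / 2)) + mu i 0 * exp (q i / 2)
          else mu_tot par d mu i)
       = subtree_rate i + mu_tot par d mu i - m i"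
  using service_terms[OF i] m_eq[OF i] m_pos[OF i] ge by auto

lemma sum_subtree_rate: "(\<Sum>i\<in>{1..d}. subtree_rate i) = (\<Sum>i\<in>{1..d}. m i) - m 1 + lam"
  using sum_children_nodes[OF tree, of m] total_exit_flow
  unfolding subtree_rate_def by (simp add: sum.distrib)

theorem Nb_simple_gradient:
  assumes ge: "\<forall>i\<in>{1..d}. b i \<longrightarrow> b' i"
  shows "Nb par d lam mu b' q = lam + (\<Sum>i\<in>{1..d}. mu_tot par d mu i)"
proof -
  have "Nb par d lam mu b' q
      = m 1 + (\<Sum>i\<in>{1..d}. subtree_rate i + mu_tot par d mu i - m i)"
    unfolding Nb_node_sum
    using node_contribution ge exp_minus_half_q[OF root_node] Lam_root lam_pos
    by (intro arg_cong2[where f="(+)"] sum.cong) auto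
  also have "\<dots> = lam + (\<Sum>i\<in>{1..d}. mu_tot par d mu i)"
    using sum_subtree_rate by (simp add: sum.distrib sum_subtractf)
  finally show ?thesis .
qed

end

theorem mainTheorem2:
  fixes par :: "nat \<Rightarrow> nat" and d :: nat and lam :: real
    and mu :: "nat \<Rightarrow> nat \<Rightarrow> real" and Lam m :: "nat \<Rightarrow> real"
    and b b' :: "nat \<Rightarrow> bool"
  assumes tree: "is_tree par d"
    and lam_pos: "lam > 0"
    and mu_edge_pos: "\<forall>i\<in>{1..d}. \<forall>j\<in>children par d i. mu i j > 0"
    and mu_exit_nonneg: "\<forall>i\<in>{1..d}. mu i 0 \<ge> 0"
    and mu_tot_pos: "\<forall>i\<in>{1..d}. mu_tot par d mu i > 0"
    and Lam: "arrival_rates par d lam mu Lam"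
    and stable: "\<forall>i\<in>{1..d}. Lam i / mu_tot par d mu i < 1"
    and normalized: "lam + (\<Sum>i\<in>{1..d}. mu_tot par d mu i) = 1"
    and m: "simple_rates par d mu Lam b m"
    and ge: "\<forall>i\<in>{1..d}. b i \<longrightarrow> b' i"
  shows "Hb par d lam mu b' (simple_gradient Lam m) = 0"
proof -
  interpret simple_rate_network par d lam mu Lam b m
    using tree lam_pos mu_edge_pos mu_exit_nonneg mu_tot_pos Lam m
    by unfold_locales
  have "Nb par d lam mu b' (simple_gradient Lam m) = 1"
    using Nb_simple_gradient[OF ge] normalized by simp
  thus ?thesis unfolding Hb_def by simp
qed

end
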